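(* Let $\mathbf{L}$ be a real symmetric $N\times N$ matrix with $\|\mathbf{L}\|\le\varrho$, orthonormal eigenvectors $\boldsymbol{\phi}_n$ and eigenvalues $\lambda_n$, $n=1,\dots,N$. Let $K\ge1$, $\psi^{(k)}\neq0,\varphi^{(k)}\in\mathbb{C}$ for $k=1,\dots,K$, $c\in\mathbb{C}$, and $\mathbf{x}\in\mathbb{C}^N$ fixed. Consider the parallel ARMA$_K$ recursion $$\mathbf{y}^{(k)}_{t+1}=\psi^{(k)}\mathbf{L}\mathbf{y}^{(k)}_t+\varphi^{(k)}\mathbf{x}\ (k=1,\dots,K),\qquad \mathbf{z}_{t+1}=\sum_{k=1}^K\mathbf{y}^{(k)}_{t+1}+c\,\mathbf{x},$$ with arbitrary initial conditions $\mathbf{y}^{(k)}_0$. Let $r_k=-\varphi^{(k)}/\psi^{(k)}$ and $p_k=1/\psi^{(k)}$. Then the frequency response of this recursion is $$H(\lambda)=c+\sum_{k=1}^K\frac{r_k}{\lambda-p_k}\qquad\text{subject to } |p_k|>\varrho \text{ for all } k,$$ i.e. under these conditions $\mathbf{z}_t$ converges linearly, irrespective of the initial conditions and of $\mathbf{L}$, to $\sum_{n=1}^N H(\lambda_n)\langle\mathbf{x},\boldsymbol{\phi}_n\rangle\boldsymbol{\phi}_n$.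
   Context: $\mathbf{L}$ is a symmetric local graph representation matrix (e.g. a possibly shifted graph Laplacian) of an undirected graph; all considered $\mathbf{L}$ have eigenvalues in $[\lambda_{\min},\lambda_{\max}]$ and $\varrho=\max\{|\lambda_{\min}|,|\lambda_{\max}|\}$. Linear convergence means convergence exponentially fast in $t$. *)

theory Defs
  imports "HOL-Analysis.Analysis"
begin

definition cmat :: "real^'n^'m \<Rightarrow> complex^'n^'m" where
  "cmat L = (\<chi> i j. complex_of_real (L $ i $ j))"

text \<open>Inner product <x, phi> = sum_i x_i * conj(phi_i) for complex x and real phi.\<close>
definition cinner_real :: "complex^'n \<Rightarrow> real^'n \<Rightarrow> complex" where
  "cinner_real x v = (\<Sum>i\<in>UNIV. x $ i * complex_of_real (v $ i))"

definition cvec :: "real^'n \<Rightarrow> complex^'n" where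
  "cvec v = (\<chi> i. complex_of_real (v $ i))"

definition arma_response ::
  "nat \<Rightarrow> complex \<Rightarrow> (nat \<Rightarrow> complex) \<Rightarrow> (nat \<Rightarrow> complex) \<Rightarrow> complex \<Rightarrow> complex" where
  "arma_response K c r p lam = c + (\<Sum>k=1..K. r k / (lam - p k))"

end

theory Submission imports Defs begin

text \<open>In the orthonormal eigenbasis of \<open>L\<close> each branch decouples: the coefficient
  \<open>a t = \<langle>y t, \<phi> n\<rangle>\<close> obeys the scalar affine recursion
  \<open>a (t+1) = \<psi> \<lambda>n a t + \<phi>c \<langle>x, \<phi> n\<rangle>\<close>. Since \<open>|\<psi> \<lambda>n| \<le> |\<psi>| \<rho> < 1\<close>, it converges
  geometrically to its fixed point \<open>\<phi>c \<langle>x, \<phi> n\<rangle> / (1 - \<psi> \<lambda>n)\<close>, which is precisely the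
  partial fraction \<open>r / (\<lambda>n - p)\<close> with \<open>r = -\<phi>c/\<psi>\<close>, \<open>p = 1/\<psi>\<close>, times \<open>\<langle>x, \<phi> n\<rangle>\<close>.
  A common rate for all branches and eigenvalues is \<open>max\<^sub>k |\<psi> k| \<rho>\<close>.\<close>

lemma cinner_real_add: "cinner_real (a + b) v = cinner_real a v + cinner_real b v"
  by (simp add: cinner_real_def sum.distrib algebra_simps)

lemma cinner_real_diff: "cinner_real (a - b) v = cinner_real a v - cinner_real b v"
  by (simp add: cinner_real_def sum_subtractf algebra_simps)

lemma cinner_real_scale: "cinner_real (s *s a) v = s * cinner_real a v"
  by (simp add: cinner_real_def sum_distrib_left mult_ac)

lemma cinner_real_sum:
  "finite A \<Longrightarrow> cinner_real (\<Sum>k\<in>A. f k) v = (\<Sum>k\<in>A. cinner_real (f k) v)"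
  by (induction A rule: finite_induct) (simp_all add: cinner_real_add, simp add: cinner_real_def)

lemma cinner_real_cvec: "cinner_real (cvec u) v = complex_of_real (u \<bullet> v)"
  by (simp add: cinner_real_def cvec_def inner_vec_def)

lemma norm_cvec: "norm (cvec v) = norm v"
  unfolding norm_vec_def cvec_def by simp

lemma norm_vector_scalar_mult: "norm ((s::complex) *s (a::complex^'n::finite)) = norm s * norm a"
  unfolding norm_vec_def by (simp add: L2_set_right_distrib norm_mult)

lemma orthonormal_family_completeness:
  fixes \<phi> :: "'n::finite \<Rightarrow> real^'n"
  assumes orth: "\<And>n m. \<phi> n \<bullet> \<phi> m = (if n = m then 1 else 0)"
  shows "(\<Sum>n\<in>UNIV. \<phi> n $ i * \<phi> n $ j) = (if i = j then 1 else 0)"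
proof -
  define P :: "real^'n^'n" where "P = (\<chi> n i. \<phi> n $ i)"
  have "P ** transpose P = mat 1"
    using orth by (simp add: P_def matrix_matrix_mult_def transpose_def mat_def vec_eq_iff inner_vec_def)
  then have "transpose P ** P = mat 1"
    using matrix_left_right_inverse by blast
  then have "(transpose P ** P) $ i $ j = mat 1 $ i $ j" by simp
  then show ?thesis by (simp add: P_def matrix_matrix_mult_def transpose_def mat_def)
qed

lemma cinner_real_expansion:
  fixes \<phi> :: "'n::finite \<Rightarrow> real^'n" and w :: "complex^'n"
  assumes orth: "\<And>n m. \<phi> n \<bullet> \<phi> m = (if n = m then 1 else 0)"
  shows "w = (\<Sum>n\<in>UNIV. cinner_real w (\<phi> n) *s cvec (\<phi> n))"
proof -
  have "(\<Sum>n\<in>UNIV. cinner_real w (\<phi> n) *s cvec (\<phi> n)) $ j = w $ j" for j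
  proof -
    have "(\<Sum>n\<in>UNIV. cinner_real w (\<phi> n) *s cvec (\<phi> n)) $ j
        = (\<Sum>n\<in>UNIV. \<Sum>i\<in>UNIV. w $ i * complex_of_real (\<phi> n $ i * \<phi> n $ j))"
      by (simp add: cinner_real_def cvec_def sum_component sum_distrib_right mult.assoc)
    also have "\<dots> = (\<Sum>i\<in>UNIV. w $ i * complex_of_real (\<Sum>n\<in>UNIV. \<phi> n $ i * \<phi> n $ j))"
      by (subst sum.swap) (simp add: sum_distrib_left)
    also have "\<dots> = w $ j"
      by (simp add: orthonormal_family_completeness[OF orth] if_distrib cong: if_cong)
    finally show ?thesis .
  qed
  then show ?thesis by (simp add: vec_eq_iff)
qed

lemma norm_le_sum_cinner_real:
  fixes \<phi> :: "'n::finite \<Rightarrow> real^'n" and w :: "complex^'n"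
  assumes orth: "\<And>n m. \<phi> n \<bullet> \<phi> m = (if n = m then 1 else 0)"
  shows "norm w \<le> (\<Sum>n\<in>UNIV. cmod (cinner_real w (\<phi> n)))"
proof -
  have unit: "norm (\<phi> n) = 1" for n
    using orth[of n n] by (simp add: norm_eq_sqrt_inner)
  have "norm w \<le> (\<Sum>n\<in>UNIV. norm (cinner_real w (\<phi> n) *s cvec (\<phi> n)))"
    by (subst cinner_real_expansion[OF orth, of w]) (rule norm_sum)
  then show ?thesis by (simp add: norm_vector_scalar_mult norm_cvec unit)
qed

lemma cinner_real_eigenbasis_sum:
  fixes \<phi> :: "'n::finite \<Rightarrow> real^'n"
  assumes orth: "\<And>n m. \<phi> n \<bullet> \<phi> m = (if n = m then 1 else 0)"
  shows "cinner_real (\<Sum>m\<in>UNIV. h m *s cvec (\<phi> m)) (\<phi> n) = h n"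
  by (simp add: cinner_real_sum cinner_real_scale cinner_real_cvec orth if_distrib cong: if_cong)

lemma cinner_real_cmat_eigenvector:
  fixes L :: "real^'n::finite^'n"
  assumes sym: "transpose L = L" and eig: "L *v v = l *\<^sub>R v"
  shows "cinner_real (cmat L *v w) v = of_real l * cinner_real w v"
proof -
  have L_sym: "L $ i $ j = L $ j $ i" for i j
    using sym by (metis transpose_def vec_lambda_beta)
  have eig_row: "(\<Sum>i\<in>UNIV. L $ j $ i * v $ i) = l * v $ j" for j
    using arg_cong[OF eig, of "\<lambda>u. u $ j"] by (simp add: matrix_vector_mult_def)
  have "cinner_real (cmat L *v w) v
      = (\<Sum>i\<in>UNIV. \<Sum>j\<in>UNIV. w $ j * complex_of_real (L $ i $ j * v $ i))"
    by (simp add: cinner_real_def cmat_def matrix_vector_mult_def sum_distrib_left mult_ac)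
  also have "\<dots> = (\<Sum>j\<in>UNIV. w $ j * complex_of_real (\<Sum>i\<in>UNIV. L $ j $ i * v $ i))"
    by (subst sum.swap) (simp add: sum_distrib_left L_sym)
  also have "\<dots> = of_real l * cinner_real w v"
    unfolding eig_row by (simp add: cinner_real_def sum_distrib_left mult_ac)
  finally show ?thesis .
qed

lemma abs_eigenvalue_le_onorm:
  fixes L :: "real^'n::finite^'n"
  assumes eig: "L *v v = l *\<^sub>R v" and unit: "norm v = 1"
  shows "\<bar>l\<bar> \<le> onorm (\<lambda>u. L *v u)"
  using onorm[OF matrix_vector_mul_bounded_linear, of L v] eig unit by simp

lemma affine_iteration_closed_form:
  fixes a :: "nat \<Rightarrow> 'a::field"
  assumes rec: "\<And>t. a (Suc t) = s * a t + b" and s: "s \<noteq> 1"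
  shows "a t - b / (1 - s) = s ^ t * (a 0 - b / (1 - s))"
proof (induction t)
  case (Suc t)
  have "a (Suc t) - b / (1 - s) = s * (a t - b / (1 - s))"
    using s by (simp add: rec field_simps)
  with Suc show ?case by simp
qed simp

lemma arma_response_partial_fractions:
  assumes "\<And>k. k \<in> {1..K} \<Longrightarrow> \<psi> k \<noteq> 0 \<and> \<psi> k * l \<noteq> 1"
  shows "arma_response K c (\<lambda>k. - \<phi>c k / \<psi> k) (\<lambda>k. 1 / \<psi> k) l
         = c + (\<Sum>k=1..K. \<phi>c k / (1 - \<psi> k * l))"
  unfolding arma_response_def
proof (intro arg_cong2[where f = "(+)"] refl sum.cong)
  fix k assume "k \<in> {1..K}"
  with assms have "\<psi> k \<noteq> 0" "1 - \<psi> k * l \<noteq> 0" by auto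
  then show "- \<phi>c k / \<psi> k / (l - 1 / \<psi> k) = \<phi>c k / (1 - \<psi> k * l)"
    by (simp add: field_simps)
qed

lemma geometric_decay_from_coefficients:
  fixes \<phi> :: "'n::finite \<Rightarrow> real^'n" and w :: "nat \<Rightarrow> complex^'n"
  assumes orth: "\<And>n m. \<phi> n \<bullet> \<phi> m = (if n = m then 1 else 0)"
    and q: "0 \<le> q"
    and coeff: "\<And>n t. cmod (cinner_real (w (Suc t)) (\<phi> n)) \<le> q ^ Suc t * D n"
  shows "\<exists>C. \<forall>t. norm (w t) \<le> C * q ^ t"
proof -
  define C where "C = max (\<Sum>n\<in>UNIV. D n) (norm (w 0))"
  have "norm (w t) \<le> C * q ^ t" for t
  proof (cases t)
    case (Suc m)
    have "norm (w t) \<le> (\<Sum>n\<in>UNIV. cmod (cinner_real (w t) (\<phi> n)))"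
      by (rule norm_le_sum_cinner_real[OF orth])
    also have "\<dots> \<le> (\<Sum>n\<in>UNIV. q ^ t * D n)"
      unfolding Suc by (intro sum_mono coeff)
    also have "\<dots> = (\<Sum>n\<in>UNIV. D n) * q ^ t"
      by (simp add: sum_distrib_right mult.commute)
    also have "\<dots> \<le> C * q ^ t"
      unfolding C_def using q by (intro mult_right_mono) auto
    finally show ?thesis .
  qed (simp add: C_def)
  then show ?thesis by blast
qed

lemma finite_uniform_contraction_rate:
  assumes "finite A" and "\<And>k. k \<in> A \<Longrightarrow> f k < (1::real)"
  shows "\<exists>q. 0 \<le> q \<and> q < 1 \<and> (\<forall>k\<in>A. f k \<le> q)"
proof -
  define q where "q = Max (insert 0 (f ` A))"
  have "q \<in> insert 0 (f ` A)"
    unfolding q_def using assms(1) by (intro Max_in) auto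
  then have "q < 1" using assms(2) by auto
  moreover have "0 \<le> q" "\<forall>k\<in>A. f k \<le> q"
    unfolding q_def using assms(1) by auto
  ultimately show ?thesis by blast
qed

lemma arma_branch_coefficient:
  fixes L :: "real^'n::finite^'n"
  assumes sym: "transpose L = L" and eig: "L *v v = l *\<^sub>R v"
    and rec: "\<And>t. y (Suc t) = \<psi> *s (cmat L *v y t) + \<phi>c *s x"
    and pole: "\<psi> * of_real l \<noteq> 1"
  shows "cinner_real (y t) v - \<phi>c * cinner_real x v / (1 - \<psi> * of_real l)
         = (\<psi> * of_real l) ^ t * (cinner_real (y 0) v - \<phi>c * cinner_real x v / (1 - \<psi> * of_real l))"
proof (rule affine_iteration_closed_form[OF _ pole])
  fix t
  show "cinner_real (y (Suc t)) v = \<psi> * of_real l * cinner_real (y t) v + \<phi>c * cinner_real x v"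
    by (simp add: rec cinner_real_add cinner_real_scale cinner_real_cmat_eigenvector[OF sym eig])
qed

lemma arma_coefficient_error:
  fixes L :: "real^'n::finite^'n"
  assumes sym: "transpose L = L" and eig: "L *v v = l *\<^sub>R v"
    and rec_y: "\<And>k t. k \<in> {1..K} \<Longrightarrow> y k (Suc t) = \<psi> k *s (cmat L *v y k t) + \<phi>c k *s x"
    and rec_z: "\<And>t. z (Suc t) = (\<Sum>k=1..K. y k (Suc t)) + c *s x"
    and psi_nz: "\<And>k. k \<in> {1..K} \<Longrightarrow> \<psi> k \<noteq> 0"
    and rate: "\<And>k. k \<in> {1..K} \<Longrightarrow> cmod (\<psi> k * of_real l) \<le> q" and q: "q < 1"
  defines "d k \<equiv> cinner_real (y k 0) v - \<phi>c k * cinner_real x v / (1 - \<psi> k * of_real l)"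
  shows "cmod (cinner_real (z (Suc t)) v
                - arma_response K c (\<lambda>k. - \<phi>c k / \<psi> k) (\<lambda>k. 1 / \<psi> k) (of_real l) * cinner_real x v)
         \<le> q ^ Suc t * (\<Sum>k=1..K. cmod (d k))"
proof -
  have pole: "\<psi> k * of_real l \<noteq> 1" if "k \<in> {1..K}" for k
    using rate[OF that] q by auto
  have response: "arma_response K c (\<lambda>k. - \<phi>c k / \<psi> k) (\<lambda>k. 1 / \<psi> k) (of_real l)
      = c + (\<Sum>k=1..K. \<phi>c k / (1 - \<psi> k * of_real l))"
    using psi_nz pole by (intro arma_response_partial_fractions) auto
  have "cinner_real (z (Suc t)) v
          - arma_response K c (\<lambda>k. - \<phi>c k / \<psi> k) (\<lambda>k. 1 / \<psi> k) (of_real l) * cinner_real x v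
      = (\<Sum>k=1..K. cinner_real (y k (Suc t)) v
                    - \<phi>c k * cinner_real x v / (1 - \<psi> k * of_real l))"
    unfolding response
    by (simp add: rec_z cinner_real_add cinner_real_sum
        cinner_real_scale sum_subtractf sum_distrib_left algebra_simps)
  also have "\<dots> = (\<Sum>k=1..K. (\<psi> k * of_real l) ^ Suc t * d k)"
  proof (intro sum.cong refl)
    fix k assume k: "k \<in> {1..K}"
    show "cinner_real (y k (Suc t)) v - \<phi>c k * cinner_real x v / (1 - \<psi> k * of_real l)
        = (\<psi> k * of_real l) ^ Suc t * d k"
      unfolding d_def by (rule arma_branch_coefficient[where y = "y k", OF sym eig rec_y[OF k] pole[OF k]])
  qed
  finally have error: "cinner_real (z (Suc t)) v
      - arma_response K c (\<lambda>k. - \<phi>c k / \<psi> k) (\<lambda>k. 1 / \<psi> k) (of_real l) * cinner_real x v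
      = (\<Sum>k=1..K. (\<psi> k * of_real l) ^ Suc t * d k)" .
  have "cmod (\<Sum>k=1..K. (\<psi> k * of_real l) ^ Suc t * d k) \<le> (\<Sum>k=1..K. q ^ Suc t * cmod (d k))"
  proof (rule order_trans[OF norm_sum], rule sum_mono)
    fix k assume "k \<in> {1..K}"
    then have "cmod (\<psi> k * of_real l) ^ Suc t \<le> q ^ Suc t"
      by (intro power_mono rate) auto
    then show "cmod ((\<psi> k * of_real l) ^ Suc t * d k) \<le> q ^ Suc t * cmod (d k)"
      unfolding norm_mult norm_power by (rule mult_right_mono) simp
  qed
  then show ?thesis unfolding error sum_distrib_left .
qed

theorem theorem2:
  fixes L :: "real^'n^'n"
    and \<rho> :: real
    and \<phi> :: "'n \<Rightarrow> real^'n"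
    and lam :: "'n \<Rightarrow> real"
    and K :: nat
    and \<psi> \<phi>c :: "nat \<Rightarrow> complex"
    and c :: complex
    and x :: "complex^'n"
    and y :: "nat \<Rightarrow> nat \<Rightarrow> complex^'n"
    and z :: "nat \<Rightarrow> complex^'n"
  assumes sym: "transpose L = L"
    and normL: "onorm (\<lambda>v. L *v v) \<le> \<rho>"
    and eig: "\<And>n. L *v \<phi> n = lam n *\<^sub>R \<phi> n"
    and orthonormal: "\<And>n m. \<phi> n \<bullet> \<phi> m = (if n = m then 1 else 0)"
    and K1: "K \<ge> 1"
    and psi_nz: "\<And>k. k \<in> {1..K} \<Longrightarrow> \<psi> k \<noteq> 0"
    and rec_y: "\<And>k t. k \<in> {1..K} \<Longrightarrow>
                  y k (Suc t) = \<psi> k *s (cmat L *v y k t) + \<phi>c k *s x"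
    and rec_z: "\<And>t. z (Suc t) = (\<Sum>k=1..K. y k (Suc t)) + c *s x"
    and poles: "\<And>k. k \<in> {1..K} \<Longrightarrow> norm (1 / \<psi> k) > \<rho>"
  shows "\<exists>C q. 0 \<le> q \<and> q < 1 \<and>
           (\<forall>t. norm (z t - (\<Sum>n\<in>UNIV.
                 (arma_response K c (\<lambda>k. - \<phi>c k / \<psi> k) (\<lambda>k. 1 / \<psi> k)
                     (complex_of_real (lam n)) * cinner_real x (\<phi> n)) *s cvec (\<phi> n)))
              \<le> C * q ^ t)"
proof -
  have lam_le: "\<bar>lam n\<bar> \<le> \<rho>" for n
    using abs_eigenvalue_le_onorm[OF eig] orthonormal[of n n] normL
    by (metis norm_eq_sqrt_inner order_trans real_sqrt_one)
  have contraction: "cmod (\<psi> k) * \<rho> < 1" if "k \<in> {1..K}" for k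
    using poles[OF that] psi_nz[OF that] by (simp add: norm_divide field_simps)
  obtain q where q: "0 \<le> q" "q < 1" and rate: "\<forall>k\<in>{1..K}. cmod (\<psi> k) * \<rho> \<le> q"
    using finite_uniform_contraction_rate[of "{1..K}" "\<lambda>k. cmod (\<psi> k) * \<rho>"] contraction by blast
  have mode_rate: "cmod (\<psi> k * of_real (lam n)) \<le> q" if "k \<in> {1..K}" for k n
  proof -
    have "cmod (\<psi> k * of_real (lam n)) \<le> cmod (\<psi> k) * \<rho>"
      using lam_le[of n] by (simp add: norm_mult mult_left_mono)
    then show ?thesis using rate that by fastforce
  qed
  define T where "T = (\<Sum>n\<in>UNIV.
    (arma_response K c (\<lambda>k. - \<phi>c k / \<psi> k) (\<lambda>k. 1 / \<psi> k)
       (complex_of_real (lam n)) * cinner_real x (\<phi> n)) *s cvec (\<phi> n))"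
  have coeff: "cmod (cinner_real (z (Suc t) - T) (\<phi> n))
        \<le> q ^ Suc t * (\<Sum>k=1..K. cmod (cinner_real (y k 0) (\<phi> n)
             - \<phi>c k * cinner_real x (\<phi> n) / (1 - \<psi> k * of_real (lam n))))" for n t
    unfolding T_def cinner_real_diff cinner_real_eigenbasis_sum[OF orthonormal]
    by (rule arma_coefficient_error[OF sym eig]) (simp_all add: rec_y rec_z psi_nz mode_rate q)
  then obtain C where "\<forall>t. norm (z t - T) \<le> C * q ^ t"
    using geometric_decay_from_coefficients[OF orthonormal q(1) coeff] by blast
  with q show ?thesis unfolding T_def by blast
qed

end
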